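(* Let $H$, $L$ be as in the context, assume $L\mid Z$, and let $S$ be a positive divisor of $Z/L$. Then for $\mathcal T_0\subseteq[MZ)$, the pair $(S,\mathcal T_0)$ is a feasible solution if and only if there exist $\ell_{m,s}\in[L)$ for $m\in[M)$, $s\in[S)$ such that $\mathcal T_0=\bigcup_{m\in[M),\,s\in[S)}\mathcal C_{m,s,\ell_{m,s}}$.
   Context: Notation: $[n)=\{0,1,\dots,n-1\}$. Let $M,N,Z$ be positive integers and let $H$ be a binary $MZ\times NZ$ matrix made of $M\times N$ blocks, each a $Z\times Z$ circulant; assume $H$ has no zero row and no two identical rows. Rows are indexed by $[MZ)$. For $i\in[MZ)$ and integer $s$, $\pi^s(i)=Z\lfloor i/Z\rfloor+((i+s)\bmod Z)$, and for $\mathcal T\subseteq[MZ)$, $\pi^s(\mathcal T)=\{\pi^s(x):x\in\mathcal T\}$. Fix an integer $L>1$. A pair $(S,\mathcal T_0)$, $S$ a positive integer and $\mathcal T_0\subseteq[MZ)$, is a feasible solution if, setting $\mathcal T_l=\pi^{lS}(\mathcal T_0)$ for $l\in[L)$, the sets $\mathcal T_0,\dots,\mathcal T_{L-1}$ are pairwise disjoint and their union is $[MZ)$. For $m\in[M)$, $s\in[S)$, $l\in[L)$ define the class $\mathcal C_{m,s,l}=\{mZ+((s+lS+rLS)\bmod Z): r\in\mathbb Z\}$ (these $LS$-classes partition $[MZ)$; for fixed $(m,s)$ the $L$ classes $\mathcal C_{m,s,0},\dots,\mathcal C_{m,s,L-1}$ partition $\{mZ+((s+rS)\bmod Z):r\in\mathbb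 Z\}$). *)

theory Defs
  imports Main
begin

definition pi_shift :: "nat \<Rightarrow> int \<Rightarrow> nat \<Rightarrow> nat" where
  "pi_shift Z s i = Z * (i div Z) + nat ((int i + s) mod int Z)"

definition circulant_blocks :: "nat \<Rightarrow> nat \<Rightarrow> nat \<Rightarrow> (nat \<Rightarrow> nat \<Rightarrow> bool) \<Rightarrow> bool" where
  "circulant_blocks M N Z H \<longleftrightarrow>
     (\<forall>m<M. \<forall>n<N. \<forall>a<Z. \<forall>b<Z.
        H (m*Z + a) (n*Z + b) = H (m*Z + (a+1) mod Z) (n*Z + (b+1) mod Z))"

definition no_zero_row :: "nat \<Rightarrow> nat \<Rightarrow> nat \<Rightarrow> (nat \<Rightarrow> nat \<Rightarrow> bool) \<Rightarrow> bool" where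
  "no_zero_row M N Z H \<longleftrightarrow> (\<forall>i<M*Z. \<exists>j<N*Z. H i j)"

definition distinct_rows :: "nat \<Rightarrow> nat \<Rightarrow> nat \<Rightarrow> (nat \<Rightarrow> nat \<Rightarrow> bool) \<Rightarrow> bool" where
  "distinct_rows M N Z H \<longleftrightarrow> (\<forall>i<M*Z. \<forall>i'<M*Z. i \<noteq> i' \<longrightarrow> (\<exists>j<N*Z. H i j \<noteq> H i' j))"

definition T_set :: "nat \<Rightarrow> nat \<Rightarrow> nat set \<Rightarrow> nat \<Rightarrow> nat set" where
  "T_set Z S T0 l = pi_shift Z (int (l * S)) ` T0"

definition feasible :: "nat \<Rightarrow> nat \<Rightarrow> nat \<Rightarrow> nat \<Rightarrow> nat set \<Rightarrow> bool" where
  "feasible M Z L S T0 \<longleftrightarrow>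
     S > 0 \<and> T0 \<subseteq> {..<M*Z} \<and>
     (\<forall>l<L. \<forall>l'<L. l \<noteq> l' \<longrightarrow> T_set Z S T0 l \<inter> T_set Z S T0 l' = {}) \<and>
     (\<Union>l<L. T_set Z S T0 l) = {..<M*Z}"

definition C_class :: "nat \<Rightarrow> nat \<Rightarrow> nat \<Rightarrow> nat \<Rightarrow> nat \<Rightarrow> nat \<Rightarrow> nat set" where
  "C_class Z L S m s l =
     {m*Z + nat ((int s + int l * int S + r * int L * int S) mod int Z) | r::int. True}"

end

theory Submission
  imports Defs
begin

text \<open>Every row is pi^(jS)(mZ + s) for some m < M, s < S and integer j, and pi^(lS) moves
  position j of such an orbit to position j + l. Hence (S, T0) is feasible iff on every orbit
  each window of L consecutive positions contains exactly one position of T0. Comparing the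
  windows ending at j + L and at j + L - 1 shows that membership in T0 is then L-periodic in j,
  so T0 meets the orbit exactly in the positions j = c (mod L) for a unique c < L; as LS
  divides Z, these positions form the class C_{m,s,c}.\<close>

lemma unique_window_periodic:
  fixes P :: "int \<Rightarrow> bool" and L :: nat
  assumes window: "\<And>j. \<exists>!l. l < L \<and> P (j - int l)"
  shows "P (j + int L) \<longleftrightarrow> P j"
proof
  assume "P j"
  obtain l where l: "l < L" "P (j + int L - int l)" using window by blast
  have "l = 0"
  proof (rule ccontr)
    assume "l \<noteq> 0"
    have "P (j + int L - 1 - int (l - 1))" "P (j + int L - 1 - int (L - 1))"
      using l \<open>l \<noteq> 0\<close> \<open>P j\<close> by (simp_all add: algebra_simps)
    moreover have "l - 1 < L" "L - 1 < L" using l by auto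
    ultimately have "l - 1 = L - 1" using window[of "j + int L - 1"] by blast
    then show False using l \<open>l \<noteq> 0\<close> by simp
  qed
  then show "P (j + int L)" using l by simp
next
  assume "P (j + int L)"
  obtain l where l: "l < L" "P (j + int L - 1 - int l)" using window by blast
  have "\<not> Suc l < L"
  proof
    assume "Suc l < L"
    moreover have "P (j + int L - int (Suc l))" using l by (simp add: algebra_simps)
    moreover have "P (j + int L - int 0)" using \<open>P (j + int L)\<close> by simp
    ultimately have "Suc l = 0" using window[of "j + int L"] by (metis zero_less_Suc order.strict_trans)
    then show False by simp
  qed
  then have "int l = int L - 1" using l by linarith
  then show "P j" using l by simp
qed

lemma periodic_mod:
  fixes P :: "int \<Rightarrow> bool" and L :: nat
  assumes periodic: "\<And>j. P (j + int L) \<longleftrightarrow> P j"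
  shows "P j \<longleftrightarrow> P (j mod int L)"
proof -
  have multiple: "P (i + int k * int L) \<longleftrightarrow> P i" for i k
  proof (induction k arbitrary: i)
    case (Suc k)
    have "P (i + int (Suc k) * int L) \<longleftrightarrow> P (i + int k * int L)"
      using periodic[of "i + int k * int L"] by (simp add: algebra_simps)
    then show ?case using Suc by simp
  qed simp
  show ?thesis
  proof (cases "j div int L \<ge> 0")
    case True
    then show ?thesis using multiple[of "j mod int L" "nat (j div int L)"] by simp
  next
    case False
    then show ?thesis using multiple[of j "nat (- (j div int L))"]
      by (simp add: algebra_simps minus_mod_eq_mult_div [symmetric])
  qed
qed

lemma unique_window_iff_periodic:
  fixes P :: "int \<Rightarrow> bool" and L :: nat
  assumes "L > 0"
  shows "(\<forall>j. \<exists>!l. l < L \<and> P (j - int l)) \<longleftrightarrow> (\<exists>c<L. \<forall>j. P j \<longleftrightarrow> j mod int L = int c)"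
proof
  assume window: "\<forall>j. \<exists>!l. l < L \<and> P (j - int l)"
  have "P (j + int L) \<longleftrightarrow> P j" for j
    using window by (intro unique_window_periodic) blast
  then have P_mod: "P j \<longleftrightarrow> P (j mod int L)" for j
    by (rule periodic_mod)
  obtain l where l: "l < L" "P (int L - 1 - int l)"
    and l_unique: "\<And>l'. l' < L \<Longrightarrow> P (int L - 1 - int l') \<Longrightarrow> l' = l"
    using window by blast
  have "P j \<longleftrightarrow> j mod int L = int (L - 1 - l)" for j
  proof -
    have jm: "int (nat (j mod int L)) = j mod int L" "nat (j mod int L) < L"
      using assms by (simp_all add: nat_less_iff)
    then have "int L - 1 - int (L - 1 - nat (j mod int L)) = j mod int L" by linarith
    then have "P (j mod int L) \<longleftrightarrow> L - 1 - nat (j mod int L) = l"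
      using l l_unique[of "L - 1 - nat (j mod int L)"] by auto
    moreover have "L - 1 - nat (j mod int L) = l \<longleftrightarrow> j mod int L = int (L - 1 - l)"
      using jm l by linarith
    ultimately show ?thesis using P_mod[of j] by blast
  qed
  then show "\<exists>c<L. \<forall>j. P j \<longleftrightarrow> j mod int L = int c"
    using assms by (intro exI[of _ "L - 1 - l"]) auto
next
  assume "\<exists>c<L. \<forall>j. P j \<longleftrightarrow> j mod int L = int c"
  then obtain c where "c < L" and P: "\<And>j. P j \<longleftrightarrow> j mod int L = int c" by blast
  show "\<forall>j. \<exists>!l. l < L \<and> P (j - int l)"
  proof
    fix j
    have "P (j - int l) \<longleftrightarrow> int l = (j - int c) mod int L" if "l < L" for l
    proof
      assume "P (j - int l)"
      then have "(j - int c) mod int L = (j - (j - int l) mod int L) mod int L" by (simp add: P)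
      also have "\<dots> = int l" using that by (simp add: mod_diff_right_eq)
      finally show "int l = (j - int c) mod int L" ..
    next
      assume "int l = (j - int c) mod int L"
      then have "(j - int l) mod int L = (j - (j - int c)) mod int L" by (simp add: mod_diff_right_eq)
      then show "P (j - int l)" using \<open>c < L\<close> by (simp add: P)
    qed
    moreover have "nat ((j - int c) mod int L) < L"
      and "int (nat ((j - int c) mod int L)) = (j - int c) mod int L"
      using assms by (simp_all add: nat_less_iff)
    ultimately show "\<exists>!l. l < L \<and> P (j - int l)"
      by (intro ex1I[of _ "nat ((j - int c) mod int L)"]) (blast, metis nat_int)
  qed
qed

lemma disjoint_cover_iff_unique_index:
  assumes "\<And>l. A l \<subseteq> U"
  shows "(\<forall>l<L. \<forall>l'<L. l \<noteq> l' \<longrightarrow> A l \<inter> A l' = {}) \<and> (\<Union>l<L. A l) = U \<longleftrightarrow>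
    (\<forall>x\<in>U. \<exists>!l. l < L \<and> x \<in> A l)"
proof (intro iffI; (elim conjE)?)
  assume disj: "\<forall>l<L. \<forall>l'<L. l \<noteq> l' \<longrightarrow> A l \<inter> A l' = {}" and cover: "(\<Union>l<L. A l) = U"
  show "\<forall>x\<in>U. \<exists>!l. l < L \<and> x \<in> A l"
  proof
    fix x assume "x \<in> U"
    then obtain l where "l < L" "x \<in> A l" using cover by blast
    moreover have "l' = l" if "l' < L" "x \<in> A l'" for l'
      using disj that \<open>l < L\<close> \<open>x \<in> A l\<close> by blast
    ultimately show "\<exists>!l. l < L \<and> x \<in> A l" by blast
  qed
next
  assume unique: "\<forall>x\<in>U. \<exists>!l. l < L \<and> x \<in> A l"
  have "x \<notin> A l \<inter> A l'" if "l < L" "l' < L" "l \<noteq> l'" for x l l'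
  proof
    assume x: "x \<in> A l \<inter> A l'"
    then have "\<exists>!l. l < L \<and> x \<in> A l" using unique assms by blast
    then show False using x that by blast
  qed
  moreover have "(\<Union>l<L. A l) = U"
  proof
    show "(\<Union>l<L. A l) \<subseteq> U" using assms by blast
    show "U \<subseteq> (\<Union>l<L. A l)" using unique by blast
  qed
  ultimately show "(\<forall>l<L. \<forall>l'<L. l \<noteq> l' \<longrightarrow> A l \<inter> A l' = {}) \<and> (\<Union>l<L. A l) = U"
    by blast
qed

lemma mod_add_multiple_mod:
  fixes x :: int
  assumes "D dvd Z"
  shows "(m * Z + x mod Z) mod D = x mod D"
proof -
  obtain e where "Z = D * e" using assms by blast
  then have "(m * Z + x mod Z) mod D = x mod Z mod D" by (metis add.commute mod_mult_self1 mult.left_commute mult.commute)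
  then show ?thesis using assms by (simp add: mod_mod_cancel)
qed

lemma int_pi_shift:
  assumes "Z > 0"
  shows "int (pi_shift Z t i) = int Z * int (i div Z) + (int i + t) mod int Z"
  using assms by (simp add: pi_shift_def)

lemma int_pi_shift_mod:
  assumes "Z > 0" and "D dvd Z"
  shows "int (pi_shift Z t i) mod int D = (int i + t) mod int D"
  using assms mod_add_multiple_mod[of "int D" "int Z" "int (i div Z)" "int i + t"]
  by (simp add: int_pi_shift mult.commute)

lemma pi_shift_div:
  assumes "Z > 0"
  shows "pi_shift Z t i div Z = i div Z"
  using assms by (simp add: pi_shift_def nat_less_iff)

lemma pi_shift_0: "pi_shift Z 0 i = i"
  by (simp add: pi_shift_def flip: of_nat_mod)

lemma pi_shift_pi_shift:
  assumes "Z > 0"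
  shows "pi_shift Z a (pi_shift Z b i) = pi_shift Z (a + b) i"
proof -
  have "(int (pi_shift Z b i) + a) mod int Z = (int (pi_shift Z b i) mod int Z + a) mod int Z"
    by (simp add: mod_add_left_eq)
  also have "\<dots> = ((int i + b) mod int Z + a) mod int Z"
    using assms by (simp add: int_pi_shift_mod)
  also have "\<dots> = (int i + b + a) mod int Z"
    by (rule mod_add_left_eq)
  finally have mod_eq: "(int (pi_shift Z b i) + a) mod int Z = (int i + (a + b)) mod int Z"
    by (simp add: ac_simps)
  have "pi_shift Z a (pi_shift Z b i) = Z * (i div Z) + nat ((int (pi_shift Z b i) + a) mod int Z)"
    using assms by (simp add: pi_shift_def[of Z a] pi_shift_div)
  also have "\<dots> = pi_shift Z (a + b) i"
    by (subst mod_eq) (simp add: pi_shift_def)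
  finally show ?thesis .
qed

lemma mem_pi_shift_image_iff:
  assumes "Z > 0"
  shows "x \<in> pi_shift Z t ` A \<longleftrightarrow> pi_shift Z (- t) x \<in> A"
proof
  assume "x \<in> pi_shift Z t ` A"
  then show "pi_shift Z (- t) x \<in> A" using assms by (auto simp: pi_shift_pi_shift pi_shift_0)
next
  assume "pi_shift Z (- t) x \<in> A"
  moreover have "x = pi_shift Z t (pi_shift Z (- t) x)" using assms by (simp add: pi_shift_pi_shift pi_shift_0)
  ultimately show "x \<in> pi_shift Z t ` A" by blast
qed

lemma pi_shift_less_iff:
  assumes "Z > 0"
  shows "pi_shift Z t i < M * Z \<longleftrightarrow> i < M * Z"
  using assms by (metis pi_shift_div less_mult_imp_div_less div_less_iff_less_mult)

text \<open>\<open>shift_orbit Z S m s j\<close> is pi^(jS)(mZ + s).\<close>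

definition shift_orbit :: "nat \<Rightarrow> nat \<Rightarrow> nat \<Rightarrow> nat \<Rightarrow> int \<Rightarrow> nat" where
  "shift_orbit Z S m s j = m * Z + nat ((int s + j * int S) mod int Z)"

lemma shift_orbit_div:
  assumes "Z > 0"
  shows "shift_orbit Z S m s j div Z = m"
  using assms by (simp add: shift_orbit_def nat_less_iff)

lemma shift_orbit_less:
  assumes "Z > 0" and "m < M"
  shows "shift_orbit Z S m s j < M * Z"
  using assms by (metis shift_orbit_div div_less_iff_less_mult)

lemma shift_orbit_mod:
  assumes "Z > 0" and "D dvd Z"
  shows "int (shift_orbit Z S m s j) mod int D = (int s + j * int S) mod int D"
proof -
  have "int (shift_orbit Z S m s j) = int m * int Z + (int s + j * int S) mod int Z"
    using assms by (simp add: shift_orbit_def)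
  then show ?thesis using assms mod_add_multiple_mod[of "int D" "int Z"] by simp
qed

lemma pi_shift_shift_orbit:
  assumes "Z > 0"
  shows "pi_shift Z (k * int S) (shift_orbit Z S m s j) = shift_orbit Z S m s (j + k)"
proof -
  have "(int (shift_orbit Z S m s j) + k * int S) mod int Z
      = (int (shift_orbit Z S m s j) mod int Z + k * int S) mod int Z"
    by (simp add: mod_add_left_eq)
  also have "\<dots> = ((int s + j * int S) mod int Z + k * int S) mod int Z"
    using shift_orbit_mod[OF assms dvd_refl] by simp
  also have "\<dots> = (int s + j * int S + k * int S) mod int Z"
    by (rule mod_add_left_eq)
  finally have mod_eq: "(int (shift_orbit Z S m s j) + k * int S) mod int Z = (int s + (j + k) * int S) mod int Z"
    by (simp add: algebra_simps)
  have "pi_shift Z (k * int S) (shift_orbit Z S m s j) = m * Z + nat ((int (shift_orbit Z S m s j) + k * int S) mod int Z)"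
    using assms by (simp add: pi_shift_def shift_orbit_div mult.commute)
  also have "\<dots> = shift_orbit Z S m s (j + k)"
    by (subst mod_eq) (simp add: shift_orbit_def)
  finally show ?thesis .
qed

lemma ex_shift_orbit:
  assumes "Z > 0" and "S > 0" and "S dvd Z" and "x < M * Z"
  shows "\<exists>m<M. \<exists>s<S. \<exists>j. x = shift_orbit Z S m s j"
proof (intro exI conjI)
  show "x div Z < M" "x mod S < S" using assms by (simp_all add: div_less_iff_less_mult)
  have "x mod Z mod S = x mod S" using assms by (simp add: mod_mod_cancel)
  then have "x mod S + x mod Z div S * S = x mod Z" by (metis mod_div_mult_eq)
  then have "int (x mod S) + int (x mod Z div S) * int S = int (x mod Z)" by (metis of_nat_add of_nat_mult)
  then show "x = shift_orbit Z S (x div Z) (x mod S) (int (x mod Z div S))"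
    using assms by (simp add: shift_orbit_def of_nat_mod [symmetric])
qed

lemma shift_orbit_eq_imp:
  assumes "Z > 0" and "L * S dvd Z" and "s < S" and "s' < S"
    and eq: "shift_orbit Z S m s j = shift_orbit Z S m' s' j'"
  shows "m = m' \<and> s = s' \<and> j mod int L = j' mod int L"
proof (intro conjI)
  show "m = m'" using eq shift_orbit_div[OF \<open>Z > 0\<close>] by metis
  have "S dvd Z" using \<open>L * S dvd Z\<close> by (rule dvd_mult_right)
  then have "int s mod int S = int s' mod int S"
    using eq shift_orbit_mod[OF \<open>Z > 0\<close>, of S] by (metis mod_mult_self1)
  then show "s = s'" using assms by simp
  have "(int s + j * int S) mod int (L * S) = (int s + j' * int S) mod int (L * S)"
    using eq shift_orbit_mod[OF \<open>Z > 0\<close> \<open>L * S dvd Z\<close>] \<open>s = s'\<close> by metis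
  then have "int L * int S dvd (j - j') * int S"
    by (simp add: mod_eq_dvd_iff algebra_simps)
  then have "int L dvd j - j'" using assms by simp
  then show "j mod int L = j' mod int L" by (simp add: mod_eq_dvd_iff)
qed

lemma C_class_eq_image:
  assumes "l < L"
  shows "C_class Z L S m s l = shift_orbit Z S m s ` {j. j mod int L = int l}"
proof -
  have "C_class Z L S m s l = (\<lambda>r. shift_orbit Z S m s (int l + r * int L)) ` UNIV"
    by (auto simp: C_class_def shift_orbit_def algebra_simps)
  also have "\<dots> = shift_orbit Z S m s ` {j. j mod int L = int l}"
  proof -
    have "(\<lambda>r. int l + r * int L) ` UNIV = {j. j mod int L = int l}"
    proof (intro set_eqI iffI)
      fix j assume "j \<in> {j. j mod int L = int l}"
      then have "j = int l + j div int L * int L" using mod_div_mult_eq[of j "int L"] by simp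
      then show "j \<in> (\<lambda>r. int l + r * int L) ` UNIV" by blast
    qed (use assms in auto)
    then show ?thesis by (metis image_image)
  qed
  finally show ?thesis .
qed

lemma feasible_iff_unique_preimage:
  assumes "Z > 0" and "S > 0" and "T0 \<subseteq> {..<M * Z}"
  shows "feasible M Z L S T0 \<longleftrightarrow>
    (\<forall>x<M * Z. \<exists>!l. l < L \<and> pi_shift Z (- int (l * S)) x \<in> T0)"
proof -
  have mem: "x \<in> T_set Z S T0 l \<longleftrightarrow> pi_shift Z (- int (l * S)) x \<in> T0" for x l
    using assms by (simp add: T_set_def mem_pi_shift_image_iff)
  have sub: "T_set Z S T0 l \<subseteq> {..<M * Z}" for l
    using assms by (auto simp: T_set_def pi_shift_less_iff)
  have "(\<forall>l<L. \<forall>l'<L. l \<noteq> l' \<longrightarrow> T_set Z S T0 l \<inter> T_set Z S T0 l' = {}) \<and>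
      (\<Union>l<L. T_set Z S T0 l) = {..<M * Z} \<longleftrightarrow>
      (\<forall>x<M * Z. \<exists>!l. l < L \<and> x \<in> T_set Z S T0 l)"
    using disjoint_cover_iff_unique_index[of "T_set Z S T0" "{..<M * Z}" L] sub
    by (simp only: Ball_def lessThan_iff)
  then show ?thesis using assms by (simp add: feasible_def mem)
qed

lemma feasible_iff_orbit_tiling:
  assumes "Z > 0" and "S > 0" and "S dvd Z" and "T0 \<subseteq> {..<M * Z}"
  shows "feasible M Z L S T0 \<longleftrightarrow>
    (\<forall>m<M. \<forall>s<S. \<forall>j. \<exists>!l. l < L \<and> shift_orbit Z S m s (j - int l) \<in> T0)"
proof -
  have shift: "pi_shift Z (- int (l * S)) (shift_orbit Z S m s j) = shift_orbit Z S m s (j - int l)"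
    for l m s j
    using pi_shift_shift_orbit[OF \<open>Z > 0\<close>, of "- int l"] by simp
  have orbits: "(\<forall>x<M * Z. Q x) \<longleftrightarrow> (\<forall>m<M. \<forall>s<S. \<forall>j. Q (shift_orbit Z S m s j))" for Q
  proof
    assume "\<forall>x<M * Z. Q x"
    then show "\<forall>m<M. \<forall>s<S. \<forall>j. Q (shift_orbit Z S m s j)"
      using shift_orbit_less[OF \<open>Z > 0\<close>] by blast
  next
    assume Q: "\<forall>m<M. \<forall>s<S. \<forall>j. Q (shift_orbit Z S m s j)"
    show "\<forall>x<M * Z. Q x"
      using Q ex_shift_orbit[OF \<open>Z > 0\<close> \<open>S > 0\<close> \<open>S dvd Z\<close>] by blast
  qed
  have "feasible M Z L S T0 \<longleftrightarrow> (\<forall>x<M * Z. \<exists>!l. l < L \<and> pi_shift Z (- int (l * S)) x \<in> T0)"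
    by (rule feasible_iff_unique_preimage[OF \<open>Z > 0\<close> \<open>S > 0\<close> \<open>T0 \<subseteq> _\<close>])
  also have "\<dots> \<longleftrightarrow> (\<forall>m<M. \<forall>s<S. \<forall>j.
      \<exists>!l. l < L \<and> pi_shift Z (- int (l * S)) (shift_orbit Z S m s j) \<in> T0)"
    by (rule orbits)
  finally show ?thesis by (simp only: shift)
qed

lemma eq_Union_C_class_iff:
  assumes "Z > 0" and "S > 0" and "L * S dvd Z" and "T0 \<subseteq> {..<M * Z}"
    and lv: "\<forall>m<M. \<forall>s<S. lv m s < L"
  shows "T0 = (\<Union>m<M. \<Union>s<S. C_class Z L S m s (lv m s)) \<longleftrightarrow>
    (\<forall>m<M. \<forall>s<S. \<forall>j. shift_orbit Z S m s j \<in> T0 \<longleftrightarrow> j mod int L = int (lv m s))"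
    (is "T0 = ?U \<longleftrightarrow> ?orbitwise")
proof -
  have "S dvd Z" using \<open>L * S dvd Z\<close> by (rule dvd_mult_right)
  have mem_U: "shift_orbit Z S m s j \<in> ?U \<longleftrightarrow> j mod int L = int (lv m s)"
    if "m < M" "s < S" for m s j
  proof
    assume "shift_orbit Z S m s j \<in> ?U"
    then obtain m' s' j' where "m' < M" "s' < S" "j' mod int L = int (lv m' s')"
      and "shift_orbit Z S m s j = shift_orbit Z S m' s' j'"
      using lv by (auto simp: C_class_eq_image)
    then show "j mod int L = int (lv m s)"
      using shift_orbit_eq_imp[OF \<open>Z > 0\<close> \<open>L * S dvd Z\<close> \<open>s < S\<close> \<open>s' < S\<close>] by auto
  next
    assume "j mod int L = int (lv m s)"
    then show "shift_orbit Z S m s j \<in> ?U" using that lv by (auto simp: C_class_eq_image)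
  qed
  have "?U \<subseteq> {..<M * Z}"
    using lv \<open>Z > 0\<close> by (auto simp: C_class_eq_image shift_orbit_less)
  show ?thesis
  proof
    assume "T0 = ?U"
    then show ?orbitwise using mem_U by blast
  next
    assume ?orbitwise
    have "x \<in> T0 \<longleftrightarrow> x \<in> ?U" if x: "x < M * Z" for x
    proof -
      obtain m s j where m: "m < M" and s: "s < S" and x_eq: "x = shift_orbit Z S m s j"
        using ex_shift_orbit[OF \<open>Z > 0\<close> \<open>S > 0\<close> \<open>S dvd Z\<close> x] by blast
      have "x \<in> T0 \<longleftrightarrow> j mod int L = int (lv m s)"
        using \<open>?orbitwise\<close> m s unfolding x_eq by blast
      also have "\<dots> \<longleftrightarrow> x \<in> ?U"
        unfolding x_eq by (rule mem_U[OF m s, symmetric])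
      finally show ?thesis .
    qed
    moreover have "x \<notin> T0" "x \<notin> ?U" if "\<not> x < M * Z" for x
      using that \<open>?U \<subseteq> _\<close> \<open>T0 \<subseteq> _\<close> by auto
    ultimately show "T0 = ?U" by blast
  qed
qed

lemma feasible_iff_periodic_orbits:
  assumes "Z > 0" and "S > 0" and "S dvd Z" and "L > 0" and "T0 \<subseteq> {..<M * Z}"
  shows "feasible M Z L S T0 \<longleftrightarrow>
    (\<forall>m<M. \<forall>s<S. \<exists>c<L. \<forall>j. shift_orbit Z S m s j \<in> T0 \<longleftrightarrow> j mod int L = int c)"
  using feasible_iff_orbit_tiling[OF \<open>Z > 0\<close> \<open>S > 0\<close> \<open>S dvd Z\<close> \<open>T0 \<subseteq> _\<close>]
    unique_window_iff_periodic[OF \<open>L > 0\<close>, of "\<lambda>j. shift_orbit Z S m s j \<in> T0" for m s]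
  by (simp only:)

lemma ex_Union_C_class_iff:
  assumes "Z > 0" and "S > 0" and "L * S dvd Z" and "T0 \<subseteq> {..<M * Z}"
  shows "(\<exists>lv. (\<forall>m<M. \<forall>s<S. lv m s < L) \<and> T0 = (\<Union>m<M. \<Union>s<S. C_class Z L S m s (lv m s))) \<longleftrightarrow>
    (\<forall>m<M. \<forall>s<S. \<exists>c<L. \<forall>j. shift_orbit Z S m s j \<in> T0 \<longleftrightarrow> j mod int L = int c)"
    (is "_ \<longleftrightarrow> (\<forall>m<M. \<forall>s<S. \<exists>c<L. ?Q m s c)")
proof -
  have "(\<exists>lv. (\<forall>m<M. \<forall>s<S. lv m s < L) \<and> T0 = (\<Union>m<M. \<Union>s<S. C_class Z L S m s (lv m s))) \<longleftrightarrow>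
      (\<exists>lv. (\<forall>m<M. \<forall>s<S. lv m s < L) \<and> (\<forall>m<M. \<forall>s<S. ?Q m s (lv m s)))"
    by (intro ex_cong1 conj_cong refl) (erule eq_Union_C_class_iff[OF assms])
  also have "\<dots> \<longleftrightarrow> (\<forall>m<M. \<forall>s<S. \<exists>c<L. ?Q m s c)"
  proof
    assume "\<forall>m<M. \<forall>s<S. \<exists>c<L. ?Q m s c"
    then obtain lv where "\<forall>m<M. \<forall>s<S. lv m s < L \<and> ?Q m s (lv m s)" by metis
    then show "\<exists>lv. (\<forall>m<M. \<forall>s<S. lv m s < L) \<and> (\<forall>m<M. \<forall>s<S. ?Q m s (lv m s))" by blast
  qed blast
  finally show ?thesis .
qed

theorem theorem2:
  fixes M N Z L S :: nat and H :: "nat \<Rightarrow> nat \<Rightarrow> bool" and T0 :: "nat set"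
  assumes "M > 0" and "N > 0" and "Z > 0"
    and "circulant_blocks M N Z H" and "no_zero_row M N Z H" and "distinct_rows M N Z H"
    and "L > 1" and "L dvd Z"
    and "S > 0" and "S dvd (Z div L)"
    and "T0 \<subseteq> {..<M*Z}"
  shows "feasible M Z L S T0 \<longleftrightarrow>
    (\<exists>lv :: nat \<Rightarrow> nat \<Rightarrow> nat. (\<forall>m<M. \<forall>s<S. lv m s < L) \<and>
        T0 = (\<Union>m<M. \<Union>s<S. C_class Z L S m s (lv m s)))"
proof -
  have "L > 0" using \<open>L > 1\<close> by simp
  have "L * S dvd Z"
    using \<open>L dvd Z\<close> \<open>S dvd Z div L\<close> by (metis dvd_mult_div_cancel mult_dvd_mono dvd_refl)
  then have "S dvd Z" by (rule dvd_mult_right)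
  show ?thesis
    using feasible_iff_periodic_orbits[OF \<open>Z > 0\<close> \<open>S > 0\<close> \<open>S dvd Z\<close> \<open>L > 0\<close> \<open>T0 \<subseteq> _\<close>]
      ex_Union_C_class_iff[OF \<open>Z > 0\<close> \<open>S > 0\<close> \<open>L * S dvd Z\<close> \<open>T0 \<subseteq> _\<close>]
    by (simp only:)
qed

end
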